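(* Let $\mathfrak A:\mathbb{R}^n\to\mathbb{R}^n$, $\mathfrak B:(\mathbb{R}^n)^*\to\mathbb{R}^n$ and $\mathfrak C:\mathbb{R}^n\to(\mathbb{R}^n)^*$ be linear maps with $\mathfrak B$ and $\mathfrak C$ symmetric, and consider on $[0,T]$ the constant symplectic system \[\begin{pmatrix}v\\ \alpha\end{pmatrix}'=\begin{pmatrix}\mathfrak A&\mathfrak B\\ \mathfrak C&-\mathfrak A^*\end{pmatrix}\begin{pmatrix}v\\ \alpha\end{pmatrix},\qquad (v,\alpha)\in\mathbb{R}^n\oplus(\mathbb{R}^n)^*.\] If $\mathfrak B$ is nonsingular, then the set of conjugate instants of the system in $\left]0,T\right]$ is finite. Conversely, if $\mathrm{Ker}(\mathfrak A^* )\cap\mathrm{Ker}(\mathfrak B)\neq\{0\}$, then every $t\in\left]0,T\right]$ is a conjugate instant.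
   Context: $\mathfrak B$ symmetric means $\mathfrak B^*=\mathfrak B$ under the identification $(\mathbb{R}^n)^{**}=\mathbb{R}^n$ (similarly for $\mathfrak C$); this is exactly the condition that the coefficient matrix lies in the Lie algebra of the symplectic group of $\omega((v,\alpha),(w,\beta))=\beta(v)-\alpha(w)$. An instant $t_0\in\left]0,T\right]$ is conjugate for the system if there exists a nontrivial solution $(v,\alpha)$ with $v(0)=v(t_0)=0$. *)

theory Defs
  imports "HOL-Analysis.Analysis"
begin

text \<open>Convention: the dual space (R^n)^* is identified with R^n via the standard
  basis; covectors are column vectors. Then a linear map A : R^n -> R^n is a matrix,
  its adjoint A^* is transpose A, and a map B : (R^n)^* -> R^n is symmetric iff
  transpose B = B (likewise for C : R^n -> (R^n)^*).\<close>

definition symmetric_mat :: "real^'n^'n \<Rightarrow> bool" where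
  "symmetric_mat M \<longleftrightarrow> transpose M = M"

definition symp_solution ::
  "real^'n^'n \<Rightarrow> real^'n^'n \<Rightarrow> real^'n^'n \<Rightarrow> real \<Rightarrow> (real \<Rightarrow> real^'n) \<Rightarrow> (real \<Rightarrow> real^'n) \<Rightarrow> bool"
  where
  "symp_solution A B C T v \<alpha> \<longleftrightarrow>
     (\<forall>t\<in>{0..T}.
        (v has_vector_derivative (A *v v t + B *v \<alpha> t)) (at t within {0..T}) \<and>
        (\<alpha> has_vector_derivative (C *v v t - transpose A *v \<alpha> t)) (at t within {0..T}))"

definition conjugate_instant ::
  "real^'n^'n \<Rightarrow> real^'n^'n \<Rightarrow> real^'n^'n \<Rightarrow> real \<Rightarrow> real \<Rightarrow> bool"
  where
  "conjugate_instant A B C T t0 \<longleftrightarrow>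
     t0 \<in> {0<..T} \<and>
     (\<exists>v \<alpha>. symp_solution A B C T v \<alpha> \<and>
        (\<exists>t\<in>{0..T}. v t \<noteq> 0 \<or> \<alpha> t \<noteq> 0) \<and>
        v 0 = 0 \<and> v t0 = 0)"

end

theory Submission
  imports Defs "HOL-Complex_Analysis.Conformal_Mappings"
begin

text \<open>By uniqueness of solutions, those with \<open>v 0 = 0\<close> are \<open>t \<mapsto> (P t a, Q t a)\<close>, where
  \<open>(P, Q)\<close> solves the matrix system with \<open>P 0 = 0\<close>, \<open>Q 0 = 1\<close>; hence every conjugate instant
  is a zero of \<open>det P\<close>. The entries of \<open>P\<close> are exponential generating functions of
  geometrically bounded sequences, so \<open>det P\<close> extends to an entire function. If \<open>B\<close> is
  invertible then \<open>P t = t B + O(t\<^sup>2)\<close>, so this function is not identically zero and has only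
  finitely many zeros on the compact interval \<open>[0, T]\<close>. Conversely, a nonzero
  \<open>x \<in> Ker A\<^sup>* \<inter> Ker B\<close> gives the constant nontrivial solution \<open>(0, x)\<close>, which makes every
  instant conjugate.\<close>

section \<open>Exponential generating functions\<close>


definition geom_bounded :: "(nat \<Rightarrow> 'a::real_normed_vector) \<Rightarrow> bool" where
  "geom_bounded a \<longleftrightarrow> (\<exists>M K. \<forall>k. norm (a k) \<le> M * K ^ k)"

definition egf :: "(nat \<Rightarrow> 'a::{real_normed_field,banach}) \<Rightarrow> 'a \<Rightarrow> 'a" where
  "egf a z = (\<Sum>k. a k / fact k * z ^ k)"

lemma summable_egf:
  fixes a :: "nat \<Rightarrow> 'a::{real_normed_field,banach}"
  assumes "geom_bounded a"
  shows "summable (\<lambda>k. a k / fact k * z ^ k)"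
proof -
  obtain M K where bound: "\<And>k. norm (a k) \<le> M * K ^ k"
    using assms unfolding geom_bounded_def by blast
  have le: "norm (a k / fact k * z ^ k) \<le> M * (inverse (fact k) * (K * norm z) ^ k)" for k
  proof -
    have "norm (a k / fact k * z ^ k) = norm (a k) * inverse (fact k) * norm z ^ k"
      by (simp add: norm_mult norm_divide norm_power norm_fact field_simps)
    also have "\<dots> \<le> M * K ^ k * inverse (fact k) * norm z ^ k"
      by (intro mult_right_mono bound) auto
    also have "\<dots> = M * (inverse (fact k) * (K * norm z) ^ k)"
      by (simp add: power_mult_distrib)
    finally show ?thesis .
  qed
  have "summable (\<lambda>k. M * (inverse (fact k) * (K * norm z) ^ k))"
    by (intro summable_mult summable_exp)
  then show ?thesis
    by (rule summable_comparison_test'[OF _ le])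
qed

lemma geom_bounded_of_real:
  "geom_bounded a \<Longrightarrow> geom_bounded (\<lambda>k. of_real (a k) :: 'a::real_normed_algebra_1)"
  unfolding geom_bounded_def by simp

lemma egf_0 [simp]: "egf a 0 = a 0"
  unfolding egf_def by (subst powser_zero) simp

lemma has_field_derivative_egf:
  fixes a :: "nat \<Rightarrow> 'a::{real_normed_field,banach}"
  assumes "geom_bounded a"
  shows "(egf a has_field_derivative egf (\<lambda>k. a (Suc k)) z) (at z)"
proof -
  have "diffs (\<lambda>k. a k / fact k) k = a (Suc k) / fact k" for k
    by (simp add: diffs_def fact_Suc divide_simps del: of_nat_Suc)
  moreover have "((\<lambda>z. \<Sum>k. a k / fact k * z ^ k) has_field_derivative
      (\<Sum>k. diffs (\<lambda>k. a k / fact k) k * z ^ k)) (at z)"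
    by (intro termdiffs_strong_converges_everywhere summable_egf assms)
  ultimately show ?thesis
    unfolding egf_def[abs_def] by simp
qed

lemma egf_add:
  assumes "geom_bounded a" "geom_bounded b"
  shows "egf (\<lambda>k. a k + b k) z = egf a z + egf b z"
  unfolding egf_def using summable_egf[OF assms(1)] summable_egf[OF assms(2)]
  by (simp add: add_divide_distrib distrib_right suminf_add)

lemma egf_diff:
  assumes "geom_bounded a" "geom_bounded b"
  shows "egf (\<lambda>k. a k - b k) z = egf a z - egf b z"
  unfolding egf_def using summable_egf[OF assms(1)] summable_egf[OF assms(2)]
  by (simp add: diff_divide_distrib left_diff_distrib suminf_diff)

lemma egf_linear_combination:
  assumes "\<And>l. l \<in> S \<Longrightarrow> geom_bounded (a l)"
  shows "egf (\<lambda>k. \<Sum>l\<in>S. c l * a l k) z = (\<Sum>l\<in>S. c l * egf (a l) z)"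
proof -
  have "egf (\<lambda>k. \<Sum>l\<in>S. c l * a l k) z = (\<Sum>k. \<Sum>l\<in>S. c l * (a l k / fact k * z ^ k))"
    unfolding egf_def sum_divide_distrib sum_distrib_right by (simp add: mult.assoc)
  also have "\<dots> = (\<Sum>l\<in>S. \<Sum>k. c l * (a l k / fact k * z ^ k))"
    using assms by (intro suminf_sum summable_mult summable_egf)
  also have "\<dots> = (\<Sum>l\<in>S. c l * egf (a l) z)"
    unfolding egf_def using assms by (intro sum.cong refl suminf_mult summable_egf)
  finally show ?thesis .
qed

lemma egf_of_real:
  assumes "geom_bounded a"
  shows "egf (\<lambda>k. of_real (a k)) (of_real t) = (of_real (egf a t) :: 'a::{real_normed_field,banach})"
  unfolding egf_def using suminf_of_real[OF summable_egf[OF assms, of t], where 'a = 'a]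
  by (simp add: of_real_divide)

definition egf_mat :: "(nat \<Rightarrow> 'a::{real_normed_field,banach}^'n^'m) \<Rightarrow> 'a \<Rightarrow> 'a^'n^'m" where
  "egf_mat X z = (\<chi> i j. egf (\<lambda>k. X k $ i $ j) z)"

definition geom_bounded_entries :: "(nat \<Rightarrow> 'a::real_normed_vector^'n^'m) \<Rightarrow> bool" where
  "geom_bounded_entries X \<longleftrightarrow> (\<forall>i j. geom_bounded (\<lambda>k. X k $ i $ j))"

lemma egf_mat_0 [simp]: "egf_mat X 0 = X 0"
  by (simp add: egf_mat_def vec_eq_iff)

lemma egf_mat_add:
  "geom_bounded_entries X \<Longrightarrow> geom_bounded_entries Y \<Longrightarrow>
    egf_mat (\<lambda>k. X k + Y k) z = egf_mat X z + egf_mat Y z"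
  by (simp add: egf_mat_def geom_bounded_entries_def vec_eq_iff egf_add)

lemma egf_mat_diff:
  "geom_bounded_entries X \<Longrightarrow> geom_bounded_entries Y \<Longrightarrow>
    egf_mat (\<lambda>k. X k - Y k) z = egf_mat X z - egf_mat Y z"
  by (simp add: egf_mat_def geom_bounded_entries_def vec_eq_iff egf_diff)

lemma egf_mat_mult_left:
  "geom_bounded_entries X \<Longrightarrow> egf_mat (\<lambda>k. M ** X k) z = M ** egf_mat X z"
  by (simp add: egf_mat_def geom_bounded_entries_def vec_eq_iff matrix_matrix_mult_def
      egf_linear_combination)

lemma has_vector_derivative_componentwise_cart:
  fixes f :: "real \<Rightarrow> real^'n"
  assumes "\<And>i. ((\<lambda>t. f t $ i) has_real_derivative f' $ i) (at t within S)"
  shows "(f has_vector_derivative f') (at t within S)"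
  unfolding has_vector_derivative_def
proof (subst has_derivative_componentwise_within, intro ballI)
  fix b :: "real^'n" assume "b \<in> Basis"
  then obtain i where b: "b = axis i 1"
    by (auto simp: Basis_vec_def)
  have "(\<lambda>h. h * f' $ i) = (*) (f' $ i)"
    by (simp add: fun_eq_iff mult.commute)
  then have "((\<lambda>t. f t $ i) has_derivative (\<lambda>h. h * f' $ i)) (at t within S)"
    using assms[of i] by (simp add: has_field_derivative_def)
  then show "((\<lambda>t. f t \<bullet> b) has_derivative (\<lambda>h. (h *\<^sub>R f') \<bullet> b)) (at t within S)"
    by (simp add: b inner_axis)
qed

lemma has_vector_derivative_egf_mat:
  fixes X :: "nat \<Rightarrow> real^'n^'m"
  assumes "geom_bounded_entries X"
  shows "((\<lambda>t. egf_mat X t *v a) has_vector_derivative (egf_mat (\<lambda>k. X (Suc k)) t *v a)) (at t)"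
proof (rule has_vector_derivative_componentwise_cart)
  fix i
  show "((\<lambda>t. (egf_mat X t *v a) $ i) has_real_derivative
      (egf_mat (\<lambda>k. X (Suc k)) t *v a) $ i) (at t)"
    using assms unfolding egf_mat_def matrix_vector_mult_def geom_bounded_entries_def
    by (auto intro!: DERIV_sum DERIV_cmult_right has_field_derivative_egf)
qed

lemma holomorphic_on_det_egf_mat:
  fixes X :: "nat \<Rightarrow> complex^'n^'n"
  assumes "geom_bounded_entries X"
  shows "(\<lambda>z. det (egf_mat X z)) holomorphic_on S"
proof -
  have "(\<lambda>z. egf_mat X z $ i $ j) holomorphic_on S" for i j
    using assms
    unfolding egf_mat_def vec_lambda_beta geom_bounded_entries_def holomorphic_on_def
      field_differentiable_def
    by (meson has_field_derivative_at_within has_field_derivative_egf)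
  then show ?thesis
    unfolding det_def
    by (intro holomorphic_on_sum holomorphic_on_mult holomorphic_on_const holomorphic_on_prod)
qed

lemma det_of_real_entries:
  "det (\<chi> i j. of_real (X $ i $ j) :: 'a::{real_algebra_1,comm_ring_1}^'n^'n) = of_real (det X)"
  by (simp add: det_def of_real_sum of_real_prod)

lemma egf_mat_of_real:
  fixes X :: "nat \<Rightarrow> real^'n^'m"
  assumes "geom_bounded_entries X"
  shows "egf_mat (\<lambda>k. \<chi> i j. complex_of_real (X k $ i $ j)) (of_real t)
       = (\<chi> i j. of_real (egf_mat X t $ i $ j))"
  using assms by (simp add: egf_mat_def geom_bounded_entries_def egf_of_real)

lemma finite_zeros_det_egf_mat:
  fixes X :: "nat \<Rightarrow> real^'n^'n"
  assumes X: "geom_bounded_entries X" and t1: "det (egf_mat X t1) \<noteq> 0"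
  shows "finite {t \<in> {a..b}. det (egf_mat X t) = 0}"
proof -
  define F where "F z = det (egf_mat (\<lambda>k. \<chi> i j. complex_of_real (X k $ i $ j)) z)" for z
  have F_real: "F (of_real t) = of_real (det (egf_mat X t))" for t
    unfolding F_def egf_mat_of_real[OF X] by (rule det_of_real_entries)
  have "finite {z \<in> of_real ` {a..b}. F z = 0}"
  proof (cases "F constant_on UNIV")
    case True
    then have "F z = F (of_real t1)" for z
      by (metis constant_on_def UNIV_I)
    then show ?thesis
      using t1 by (simp add: F_real)
  next
    case False
    moreover have "F holomorphic_on UNIV"
      unfolding F_def[abs_def] using X
      by (intro holomorphic_on_det_egf_mat) (simp add: geom_bounded_entries_def geom_bounded_of_real)
    ultimately show ?thesis
      by (intro holomorphic_compact_finite_zeros[OF _ open_UNIV connected_UNIV])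
        (auto intro: compact_continuous_image continuous_intros)
  qed
  then have "finite (of_real ` {t \<in> {a..b}. det (egf_mat X t) = 0} :: complex set)"
    by (rule finite_subset[rotated]) (auto simp: F_real)
  then show ?thesis
    by (rule finite_imageD) (simp add: inj_on_def)
qed

section \<open>Uniqueness for linear differential equations\<close>

lemma has_real_derivative_inner_self:
  fixes x :: "real \<Rightarrow> 'a::real_inner"
  assumes "(x has_vector_derivative x') (at s within S)"
  shows "((\<lambda>s. x s \<bullet> x s) has_real_derivative 2 * (x s \<bullet> x')) (at s within S)"
proof -
  have "(x has_derivative (\<lambda>h. h *\<^sub>R x')) (at s within S)"
    using assms unfolding has_vector_derivative_def .
  then have "((\<lambda>s. x s \<bullet> x s) has_derivative (\<lambda>h. x s \<bullet> (h *\<^sub>R x') + (h *\<^sub>R x') \<bullet> x s))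
      (at s within S)"
    by (intro has_derivative_inner)
  moreover have "(\<lambda>h. x s \<bullet> (h *\<^sub>R x') + (h *\<^sub>R x') \<bullet> x s) = (*) (2 * (x s \<bullet> x'))"
    by (auto simp: inner_commute algebra_simps)
  ultimately show ?thesis
    unfolding has_field_derivative_def by simp
qed

lemma linear_ode_initial_zero:
  fixes x :: "real \<Rightarrow> 'a::real_inner"
  assumes f: "bounded_linear f"
    and x': "\<And>s. s \<in> {0..T} \<Longrightarrow> (x has_vector_derivative f (x s)) (at s within {0..T})"
    and x0: "x 0 = 0" and t: "t \<in> {0..T}"
  shows "x t = 0"
proof -
  obtain K where K: "\<And>y. norm (f y) \<le> norm y * K"
    using bounded_linear.bounded[OF f] by blast
  \<comment> \<open>\<open>g\<close> is nonincreasing since \<open>(x \<bullet> x)' = 2 (x \<bullet> f x) \<le> 2 K (x \<bullet> x)\<close>.\<close>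
  define g where "g s = exp (- 2 * K * s) * (x s \<bullet> x s)" for s
  define g' where "g' s = exp (- 2 * K * s) * (2 * (x s \<bullet> f (x s)) - 2 * K * (x s \<bullet> x s))" for s
  have "(g has_real_derivative g' s) (at s within {0..t})" if "s \<in> {0..t}" for s
  proof -
    have "(x has_vector_derivative f (x s)) (at s within {0..t})"
      by (rule has_vector_derivative_within_subset[OF x']) (use that t in auto)
    then have "((\<lambda>s. x s \<bullet> x s) has_real_derivative 2 * (x s \<bullet> f (x s))) (at s within {0..t})"
      by (rule has_real_derivative_inner_self)
    moreover have "((\<lambda>s. exp (- 2 * K * s)) has_real_derivative - 2 * K * exp (- 2 * K * s))
        (at s within {0..t})"
      by (auto intro!: derivative_eq_intros)
    ultimately show ?thesis
      unfolding g_def[abs_def] g'_def by (rule DERIV_mult[rotated, THEN DERIV_cong]) (simp add: algebra_simps)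
  qed
  then obtain \<xi> where "g t - g 0 = g' \<xi> * (t - 0)"
    using mvt_very_simple[of 0 t g "\<lambda>s. (*) (g' s)"] t
    unfolding has_field_derivative_def by auto
  moreover have "g' s \<le> 0" for s
  proof -
    have "x s \<bullet> f (x s) \<le> norm (x s) * norm (f (x s))"
      by (rule norm_cauchy_schwarz)
    also have "\<dots> \<le> norm (x s) * (norm (x s) * K)"
      by (intro mult_left_mono K norm_ge_zero)
    also have "\<dots> = K * (x s \<bullet> x s)"
      by (simp add: power2_norm_eq_inner[symmetric] power2_eq_square)
    finally show ?thesis
      unfolding g'_def by (simp add: mult_nonneg_nonpos)
  qed
  ultimately have "g t \<le> 0"
    using t x0 by (simp add: g_def mult_nonpos_nonneg)
  then have "x t \<bullet> x t \<le> 0"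
    unfolding g_def by (simp add: mult_le_0_iff)
  then show ?thesis
    by (metis inner_gt_zero_iff not_le)
qed

lemma linear_ode_unique:
  fixes x y :: "real \<Rightarrow> 'a::real_inner"
  assumes f: "bounded_linear f"
    and x': "\<And>s. s \<in> {0..T} \<Longrightarrow> (x has_vector_derivative f (x s)) (at s within {0..T})"
    and y': "\<And>s. s \<in> {0..T} \<Longrightarrow> (y has_vector_derivative f (y s)) (at s within {0..T})"
    and "x 0 = y 0" "t \<in> {0..T}"
  shows "x t = y t"
proof -
  have "(\<lambda>s. x s - y s) t = 0"
  proof (rule linear_ode_initial_zero[OF f])
    fix s assume "s \<in> {0..T}"
    from has_vector_derivative_diff[OF x'[OF this] y'[OF this]]
    show "((\<lambda>s. x s - y s) has_vector_derivative f (x s - y s)) (at s within {0..T})"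
      by (simp add: linear_diff[OF bounded_linear.linear[OF f]])
  qed (use assms in auto)
  then show ?thesis
    by simp
qed

section \<open>The constant symplectic system\<close>

definition symp_field ::
  "real^'n^'n \<Rightarrow> real^'n^'n \<Rightarrow> real^'n^'n \<Rightarrow> (real^'n) \<times> (real^'n) \<Rightarrow> (real^'n) \<times> (real^'n)"
  where "symp_field A B C z = (A *v fst z + B *v snd z, C *v fst z - transpose A *v snd z)"

lemma bounded_linear_symp_field: "bounded_linear (symp_field A B C)"
  unfolding symp_field_def[abs_def]
  by (intro bounded_linear_Pair bounded_linear_add bounded_linear_sub
      bounded_linear_compose[OF matrix_vector_mul_bounded_linear] bounded_linear_fst bounded_linear_snd)

lemma symp_solution_has_vector_derivative:
  assumes "symp_solution A B C T v \<alpha>" "t \<in> {0..T}"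
  shows "((\<lambda>t. (v t, \<alpha> t)) has_vector_derivative symp_field A B C (v t, \<alpha> t)) (at t within {0..T})"
  using assms unfolding symp_solution_def symp_field_def
  by (auto intro: has_vector_derivative_Pair)

lemma symp_solution_unique:
  assumes "symp_solution A B C T v \<alpha>" "symp_solution A B C T w \<beta>"
    and "v 0 = w 0" "\<alpha> 0 = \<beta> 0" "t \<in> {0..T}"
  shows "v t = w t \<and> \<alpha> t = \<beta> t"
  using linear_ode_unique[OF bounded_linear_symp_field
      symp_solution_has_vector_derivative[OF assms(1)] symp_solution_has_vector_derivative[OF assms(2)]]
    assms(3-5)
  by auto

text \<open>Taylor coefficients at \<open>0\<close> of the matrix solution \<open>(P, Q)\<close> with \<open>P 0 = 0\<close>, \<open>Q 0 = 1\<close>.\<close>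

fun symp_coeffs :: "real^'n^'n \<Rightarrow> real^'n^'n \<Rightarrow> real^'n^'n \<Rightarrow> nat \<Rightarrow> (real^'n^'n) \<times> (real^'n^'n)" where
  "symp_coeffs A B C 0 = (mat 0, mat 1)"
| "symp_coeffs A B C (Suc k) =
    (A ** fst (symp_coeffs A B C k) + B ** snd (symp_coeffs A B C k),
     C ** fst (symp_coeffs A B C k) - transpose A ** snd (symp_coeffs A B C k))"

lemma symp_field_funpow:
  "(symp_field A B C ^^ k) (0, x) = (fst (symp_coeffs A B C k) *v x, snd (symp_coeffs A B C k) *v x)"
  by (induction k)
    (simp_all add: symp_field_def matrix_vector_mul_assoc matrix_vector_mult_add_rdistrib
      matrix_vector_mult_diff_rdistrib del: transpose_matrix_vector)

lemma norm_funpow_le: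
  fixes f :: "'a::real_normed_vector \<Rightarrow> 'a"
  assumes "\<And>z. norm (f z) \<le> norm z * L" "0 \<le> L"
  shows "norm ((f ^^ k) z) \<le> L ^ k * norm z"
proof (induction k)
  case (Suc k)
  have "norm ((f ^^ Suc k) z) \<le> norm ((f ^^ k) z) * L"
    using assms(1)[of "(f ^^ k) z"] by simp
  also have "\<dots> \<le> L ^ k * norm z * L"
    using Suc assms(2) by (rule mult_right_mono)
  finally show ?case
    by (simp add: mult_ac)
qed simp

lemma geom_bounded_entries_symp_coeffs:
  fixes A B C M :: "real^'n^'n"
  shows "geom_bounded_entries (\<lambda>k. M ** fst (symp_coeffs A B C k))"
  "geom_bounded_entries (\<lambda>k. M ** snd (symp_coeffs A B C k))"
  "geom_bounded_entries (\<lambda>k. fst (symp_coeffs A B C k))"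
  "geom_bounded_entries (\<lambda>k. snd (symp_coeffs A B C k))"
proof -
  obtain L where L: "\<And>z. norm (symp_field A B C z) \<le> norm z * L" "L > 0"
    using bounded_linear.pos_bounded[OF bounded_linear_symp_field] by blast
  have coeffs_bound: "norm (fst (symp_coeffs A B C k) *v axis j 1) \<le> L ^ k"
    "norm (snd (symp_coeffs A B C k) *v axis j 1) \<le> L ^ k" for k j
  proof -
    have "norm ((symp_field A B C ^^ k) (0, axis j 1)) \<le> L ^ k"
      using norm_funpow_le[OF L(1) less_imp_le[OF L(2)], of k "(0, axis j 1)"] by simp
    then show "norm (fst (symp_coeffs A B C k) *v axis j 1) \<le> L ^ k"
      "norm (snd (symp_coeffs A B C k) *v axis j 1) \<le> L ^ k"
      unfolding symp_field_funpow by (meson norm_fst_le norm_snd_le order_trans)+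
  qed
  have entry_bound: "\<bar>(N ** X) $ i $ j\<bar> \<le> LN * L ^ k"
    if LN: "\<And>x. norm (N *v x) \<le> norm x * LN" "LN > 0" and X: "norm (X *v axis j 1) \<le> L ^ k"
    for N X :: "real^'n^'n" and LN k i j
  proof -
    have "\<bar>(N ** X) $ i $ j\<bar> = \<bar>(N *v (X *v axis j 1)) $ i\<bar>"
      unfolding matrix_vector_mult_basis
      by (simp add: column_def matrix_matrix_mult_def matrix_vector_mult_def)
    also have "\<dots> \<le> norm (X *v axis j 1) * LN"
      using component_le_norm_cart LN(1) order_trans by blast
    also have "\<dots> \<le> L ^ k * LN"
      using X LN(2) by (simp add: mult_right_mono)
    finally show ?thesis
      by (simp add: mult_ac)
  qed
  have general: "geom_bounded_entries (\<lambda>k. N ** fst (symp_coeffs A B C k))"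
    "geom_bounded_entries (\<lambda>k. N ** snd (symp_coeffs A B C k))" for N :: "real^'n^'n"
  proof -
    obtain LN where "\<And>x. norm (N *v x) \<le> norm x * LN" "LN > 0"
      using bounded_linear.pos_bounded[OF matrix_vector_mul_bounded_linear[of N]] by blast
    then show "geom_bounded_entries (\<lambda>k. N ** fst (symp_coeffs A B C k))"
      "geom_bounded_entries (\<lambda>k. N ** snd (symp_coeffs A B C k))"
      unfolding geom_bounded_entries_def geom_bounded_def real_norm_def
      using entry_bound coeffs_bound by blast+
  qed
  from general[of M] general[of "mat 1"]
  show "geom_bounded_entries (\<lambda>k. M ** fst (symp_coeffs A B C k))"
    "geom_bounded_entries (\<lambda>k. M ** snd (symp_coeffs A B C k))"
    "geom_bounded_entries (\<lambda>k. fst (symp_coeffs A B C k))"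
    "geom_bounded_entries (\<lambda>k. snd (symp_coeffs A B C k))"
    by (simp_all add: matrix_mul_lid)
qed

definition fund_P :: "real^'n^'n \<Rightarrow> real^'n^'n \<Rightarrow> real^'n^'n \<Rightarrow> real \<Rightarrow> real^'n^'n" where
  "fund_P A B C = egf_mat (\<lambda>k. fst (symp_coeffs A B C k))"

definition fund_Q :: "real^'n^'n \<Rightarrow> real^'n^'n \<Rightarrow> real^'n^'n \<Rightarrow> real \<Rightarrow> real^'n^'n" where
  "fund_Q A B C = egf_mat (\<lambda>k. snd (symp_coeffs A B C k))"

lemma fund_P_0: "fund_P A B C 0 = mat 0"
  and fund_Q_0: "fund_Q A B C 0 = mat 1"
  by (simp_all add: fund_P_def fund_Q_def)

lemma egf_mat_symp_coeffs_Suc: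
  "egf_mat (\<lambda>k. fst (symp_coeffs A B C (Suc k))) t = A ** fund_P A B C t + B ** fund_Q A B C t"
  "egf_mat (\<lambda>k. snd (symp_coeffs A B C (Suc k))) t = C ** fund_P A B C t - transpose A ** fund_Q A B C t"
  by (simp_all add: fund_P_def fund_Q_def egf_mat_add egf_mat_diff egf_mat_mult_left
      geom_bounded_entries_symp_coeffs)

lemma symp_solution_fund:
  "symp_solution A B C T (\<lambda>t. fund_P A B C t *v a) (\<lambda>t. fund_Q A B C t *v a)"
  unfolding symp_solution_def
proof (intro ballI conjI)
  fix t
  have "((\<lambda>t. fund_P A B C t *v a) has_vector_derivative
      (A ** fund_P A B C t + B ** fund_Q A B C t) *v a) (at t)"
    using has_vector_derivative_egf_mat[OF geom_bounded_entries_symp_coeffs(3), where t = t and a = a]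
    unfolding egf_mat_symp_coeffs_Suc fund_P_def[symmetric] .
  then show "((\<lambda>t. fund_P A B C t *v a) has_vector_derivative
      A *v (fund_P A B C t *v a) + B *v (fund_Q A B C t *v a)) (at t within {0..T})"
    by (simp add: matrix_vector_mul_assoc matrix_vector_mult_add_rdistrib has_vector_derivative_at_within)
  have "((\<lambda>t. fund_Q A B C t *v a) has_vector_derivative
      (C ** fund_P A B C t - transpose A ** fund_Q A B C t) *v a) (at t)"
    using has_vector_derivative_egf_mat[OF geom_bounded_entries_symp_coeffs(4), where t = t and a = a]
    unfolding egf_mat_symp_coeffs_Suc fund_Q_def[symmetric] .
  then show "((\<lambda>t. fund_Q A B C t *v a) has_vector_derivative
      C *v (fund_P A B C t *v a) - transpose A *v (fund_Q A B C t *v a)) (at t within {0..T})"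
    by (simp add: matrix_vector_mul_assoc matrix_vector_mult_diff_rdistrib has_vector_derivative_at_within
        del: transpose_matrix_vector)
qed

lemma symp_solution_eq_fund:
  assumes "symp_solution A B C T v \<alpha>" "v 0 = 0" "t \<in> {0..T}"
  shows "v t = fund_P A B C t *v \<alpha> 0 \<and> \<alpha> t = fund_Q A B C t *v \<alpha> 0"
  by (rule symp_solution_unique[OF assms(1) symp_solution_fund])
    (use assms in \<open>simp_all add: fund_P_0 fund_Q_0 matrix_vector_mul_lid\<close>)

lemma det_eq_0_if_kernel:
  fixes M :: "real^'n^'n"
  assumes "M *v x = 0" "x \<noteq> 0"
  shows "det M = 0"
proof (rule ccontr)
  assume "det M \<noteq> 0"
  then obtain N where "N ** M = mat 1"
    using invertible_det_nz invertible_left_inverse by blast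
  then show False
    using assms matrix_left_invertible_ker by blast
qed

lemma conjugate_instant_imp_det_fund_P:
  assumes "conjugate_instant A B C T t"
  shows "det (fund_P A B C t) = 0"
proof -
  obtain v \<alpha> where sol: "symp_solution A B C T v \<alpha>"
    and nontrivial: "\<exists>s\<in>{0..T}. v s \<noteq> 0 \<or> \<alpha> s \<noteq> 0"
    and "v 0 = 0" "v t = 0" "t \<in> {0<..T}"
    using assms unfolding conjugate_instant_def by blast
  define a where "a = \<alpha> 0"
  have eq: "v s = fund_P A B C s *v a \<and> \<alpha> s = fund_Q A B C s *v a" if "s \<in> {0..T}" for s
    unfolding a_def using symp_solution_eq_fund[OF sol \<open>v 0 = 0\<close> that] .
  with nontrivial have "a \<noteq> 0"
    by auto
  moreover have "fund_P A B C t *v a = 0"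
    using eq[of t] \<open>v t = 0\<close> \<open>t \<in> {0<..T}\<close> by simp
  ultimately show ?thesis
    by (intro det_eq_0_if_kernel)
qed

lemma has_real_derivative_fund_P_0:
  "((\<lambda>t. fund_P A B C t $ i $ j) has_real_derivative B $ i $ j) (at 0)"
proof -
  have "geom_bounded (\<lambda>k. fst (symp_coeffs A B C k) $ i $ j)"
    using geom_bounded_entries_symp_coeffs(3) unfolding geom_bounded_entries_def by blast
  from has_field_derivative_egf[OF this, of 0] show ?thesis
    by (simp add: fund_P_def egf_mat_def matrix_mul_rid)
qed

lemma det_fund_P_nonzero:
  assumes "invertible B"
  shows "\<exists>t. det (fund_P A B C t) \<noteq> 0"
proof -
  have "((\<lambda>t. fund_P A B C t $ i $ j / t) \<longlongrightarrow> B $ i $ j) (at 0)" for i j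
    using has_real_derivative_fund_P_0[of A B C i j]
    by (simp add: has_field_derivative_iff fund_P_0)
  then have "((\<lambda>t. det (\<chi> i j. fund_P A B C t $ i $ j / t)) \<longlongrightarrow> det B) (at 0)"
    unfolding det_def vec_lambda_beta by (intro tendsto_intros)
  moreover have "det B \<noteq> 0"
    using assms invertible_det_nz by blast
  ultimately have "\<forall>\<^sub>F t in at 0. det (\<chi> i j. fund_P A B C t $ i $ j / t) \<noteq> 0"
    by (rule tendsto_imp_eventually_ne)
  then obtain d where "d > 0"
    and d: "\<And>t. t \<noteq> 0 \<Longrightarrow> dist t 0 < d \<Longrightarrow> det (\<chi> i j. fund_P A B C t $ i $ j / t) \<noteq> 0"
    unfolding eventually_at by auto
  define t where "t = d / 2"
  have "t \<noteq> 0" "dist t 0 < d"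
    using \<open>d > 0\<close> by (simp_all add: t_def)
  with d have "t \<noteq> 0" "det (\<chi> i j. fund_P A B C t $ i $ j / t) \<noteq> 0"
    by blast+
  moreover have "(\<chi> i j. fund_P A B C t $ i $ j / t) = (\<chi> i. (1 / t) *s (fund_P A B C t $ i))"
    by (simp add: vec_eq_iff)
  ultimately show ?thesis
    using det_rows_mul[of "\<lambda>_. 1 / t" "\<lambda>i. fund_P A B C t $ i"] by auto
qed

lemma conjugate_instant_of_kernel:
  assumes "transpose A *v x = 0" "B *v x = 0" "x \<noteq> 0" "t \<in> {0<..T}"
  shows "conjugate_instant A B C T t"
proof -
  have "symp_solution A B C T (\<lambda>_. 0) (\<lambda>_. x)"
    unfolding symp_solution_def using assms(1,2) by (simp add: has_vector_derivative_const)
  then show ?thesis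
    unfolding conjugate_instant_def using assms(3,4) by fastforce
qed

theorem lemma5p7:
  fixes A B C :: "real^'n^'n" and T :: real
  assumes "symmetric_mat B" and "symmetric_mat C"
  shows "(invertible B \<longrightarrow> finite {t. conjugate_instant A B C T t})
       \<and> ({x. transpose A *v x = 0} \<inter> {x. B *v x = 0} \<noteq> {0}
           \<longrightarrow> (\<forall>t\<in>{0<..T}. conjugate_instant A B C T t))"
proof (intro conjI impI)
  assume "invertible B"
  then obtain t1 where "det (fund_P A B C t1) \<noteq> 0"
    using det_fund_P_nonzero by blast
  then have "finite {t \<in> {0..T}. det (fund_P A B C t) = 0}"
    unfolding fund_P_def by (intro finite_zeros_det_egf_mat geom_bounded_entries_symp_coeffs)
  moreover have "{t. conjugate_instant A B C T t} \<subseteq> {t \<in> {0..T}. det (fund_P A B C t) = 0}"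
  proof
    fix t assume "t \<in> {t. conjugate_instant A B C T t}"
    then have conj: "conjugate_instant A B C T t"
      by simp
    then show "t \<in> {t \<in> {0..T}. det (fund_P A B C t) = 0}"
      using conjugate_instant_imp_det_fund_P[OF conj] by (simp add: conjugate_instant_def)
  qed
  ultimately show "finite {t. conjugate_instant A B C T t}"
    by (rule finite_subset[rotated])
next
  assume "{x. transpose A *v x = 0} \<inter> {x. B *v x = 0} \<noteq> {0}"
  then obtain x where "transpose A *v x = 0" "B *v x = 0" "x \<noteq> 0"
    by auto
  then show "\<forall>t\<in>{0<..T}. conjugate_instant A B C T t"
    using conjugate_instant_of_kernel by blast
qed

end
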